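(* Let $\tilde g$ be a continuous totally positive function of one of the following forms: either $\tilde g=g$ with $$\hat g(\omega)=\prod_{\nu=1}^{\infty}\frac{e^{2\pi i\omega/a_\nu}}{1+2\pi i\omega/a_\nu},$$ where $(a_\nu)_{\nu\in\mathbb{N}}\subset\mathbb{R}\setminus\{0\}$ with $\sum_{\nu}a_\nu^{-2}<\infty$, or $\tilde g=g_n$ with $$\hat g_n(\omega)=\prod_{\nu=1}^{n}\frac{e^{2\pi i\omega/a_\nu}}{1+2\pi i\omega/a_\nu},\qquad a_1,\dots,a_n\in\mathbb{R}\setminus\{0\}.$$ Then the function $x\mapsto\mathrm Z\tilde g(x,\tfrac12)$ is real-valued, $2$-periodic, and not identically zero.
   Context: The Fourier transform is $\hat f(\omega)=\int_{\mathbb{R}} f(t)e^{-2\pi i t\omega}\,dt$. The Zak transform is $\mathrm Zf(x,\omega)=\sum_{k\in\mathbb{Z}} f(x+k)e^{-2\pi i k\omega}$; in particular $\mathrm Z\tilde g(x,\tfrac12)=\sum_{k\in\mathbb{Z}}(-1)^k\tilde g(x+k)$. *)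

theory Defs
  imports "HOL-Analysis.Analysis" "HOL-Combinatorics.Permutations"
begin

definition fourier :: "(real \<Rightarrow> complex) \<Rightarrow> real \<Rightarrow> complex" where
  "fourier f w = (LINT t|lborel. f t * exp (- 2 * pi * \<i> * complex_of_real (t * w)))"

definition zak :: "(real \<Rightarrow> complex) \<Rightarrow> real \<Rightarrow> real \<Rightarrow> complex" where
  "zak f x w = (\<Sum>\<^sub>\<infinity>k::int. f (x + of_int k) * exp (- 2 * pi * \<i> * complex_of_real (of_int k * w)))"

text \<open>Total positivity: all determinants det[g(x_i - y_j)] with x_1<...<x_N,
  y_1<...<y_N (any N) are nonnegative; determinant written via the Leibniz formula.\<close>
definition totally_positive :: "(real \<Rightarrow> real) \<Rightarrow> bool" where
  "totally_positive g \<longleftrightarrow>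
     (\<forall>(N::nat) (x::nat \<Rightarrow> real) (y::nat \<Rightarrow> real).
        strict_mono_on {..<N} x \<longrightarrow> strict_mono_on {..<N} y \<longrightarrow>
        0 \<le> (\<Sum>p | p permutes {..<N}. of_int (sign p) * (\<Prod>i<N. g (x i - y (p i)))))"

definition tp_factor :: "real \<Rightarrow> real \<Rightarrow> complex" where
  "tp_factor a w = exp (2 * pi * \<i> * complex_of_real (w / a)) / (1 + 2 * pi * \<i> * complex_of_real (w / a))"

end

theory Submission
  imports Defs
begin

text \<open>Total positivity for one and two points makes \<open>g\<close> nonnegative and midpoint
  log-concave, \<open>g p g q \<le> g ((p + q) / 2)\<^sup>2\<close>; with continuity this forces \<open>g\<close> to be
  quasi-concave (unimodal). For a nonnegative integrable unimodal function every value
  \<open>g (x + k)\<close> except the one at the peak is bounded by the integral of \<open>g\<close> over an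
  adjacent unit interval, so the integer translates of \<open>g\<close> are summable. Hence
  \<open>Z g (x, 1/2) = \<Sum>\<^sub>k (-1)\<^sup>k g (x + k)\<close> converges absolutely, is real, and changes sign
  under \<open>x \<mapsto> x + 1\<close>. Periodizing the Fourier integral expresses \<open>\<hat>g (1/2)\<close> as the
  integral over \<open>[0, 1)\<close> of \<open>exp (-\<pi> i x) Z g (x, 1/2)\<close>, and \<open>\<hat>g (1/2) \<noteq> 0\<close> because no factor
  of the product vanishes.\<close>

definition quasiconcave :: "('a::linorder \<Rightarrow> 'b::linorder) \<Rightarrow> bool" where
  "quasiconcave f \<longleftrightarrow> (\<forall>a b c. a < b \<longrightarrow> b < c \<longrightarrow> min (f a) (f c) \<le> f b)"

lemma quasiconcaveD: "quasiconcave f \<Longrightarrow> a < b \<Longrightarrow> b < c \<Longrightarrow> min (f a) (f c) \<le> f b"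
  unfolding quasiconcave_def by blast

lemma totally_positive_nonneg:
  assumes "totally_positive g"
  shows "0 \<le> g t"
proof -
  have mono: "strict_mono_on {..<1} (f :: nat \<Rightarrow> real)" for f
    by (auto simp: strict_mono_on_def)
  have "{p. p permutes {..<1::nat}} = {id}"
    by (auto simp: lessThan_Suc)
  with assms[unfolded totally_positive_def, rule_format, OF mono mono, of "\<lambda>_. t" "\<lambda>_. 0"]
  show ?thesis by simp
qed

lemma sum_permutes_two:
  "(\<Sum>p | p permutes {..<2::nat}. F p) = F id + F (Transposition.transpose 0 1)"
proof -
  have "{..<2::nat} = insert 0 {1}" by auto
  then show ?thesis
    by (simp add: sum_over_permutations_insert)
qed

lemma totally_positive_midpoint:
  assumes "totally_positive g" and "p < q"
  shows "g p * g q \<le> g ((p + q) / 2) * g ((p + q) / 2)"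
proof -
  define m where "m = (p + q) / 2"
  define x where "x = (\<lambda>i::nat. if i = 0 then m else q)"
  define y where "y = (\<lambda>i::nat. if i = 0 then 0 else m - p)"
  have "strict_mono_on {..<2} x" "strict_mono_on {..<2} y"
    using \<open>p < q\<close> by (auto simp: strict_mono_on_def x_def y_def m_def)
  with assms(1) have "0 \<le> (\<Sum>\<pi> | \<pi> permutes {..<2}. of_int (sign \<pi>) * (\<Prod>i<2. g (x i - y (\<pi> i))))"
    unfolding totally_positive_def by blast
  then have "0 \<le> g m * g m - g p * g q"
    unfolding sum_permutes_two
    by (simp add: sign_swap_id x_def y_def numeral_2_eq_2 m_def field_simps)
  then show ?thesis unfolding m_def by simp
qed

lemma quasiconcave_if_midpoint_log_concave:
  fixes g :: "real \<Rightarrow> real"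
  assumes cont: "continuous_on UNIV g" and nonneg: "\<And>t. 0 \<le> g t"
    and midpoint: "\<And>p q. p < q \<Longrightarrow> g p * g q \<le> g ((p + q) / 2) * g ((p + q) / 2)"
  shows "quasiconcave g"
  unfolding quasiconcave_def
proof (intro allI impI, rule ccontr)
  fix b a c :: real
  assume "b < a" "a < c" and "\<not> min (g b) (g c) \<le> g a"
  define m where "m = min (g b) (g c)"
  define L where "L = {t. m \<le> g t}"
  have "g a < m" "0 < m"
    using \<open>\<not> min (g b) (g c) \<le> g a\<close> nonneg[of a] by (auto simp: m_def)
  have "closed L"
    unfolding L_def using closed_Collect_le[of "\<lambda>_. m" g] cont by auto
  \<comment> \<open>the last point of \<open>L\<close> before \<open>a\<close> and the first one after it\<close>
  have "b \<in> {b..a} \<inter> L" "c \<in> {a..c} \<inter> L"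
    using \<open>b < a\<close> \<open>a < c\<close> by (auto simp: L_def m_def)
  have "compact ({b..a} \<inter> L)" "{b..a} \<inter> L \<noteq> {}"
    using \<open>closed L\<close> \<open>b \<in> {b..a} \<inter> L\<close> by auto
  from compact_attains_sup[OF this] obtain p
    where p: "p \<in> {b..a} \<inter> L" and p_max: "\<And>t. t \<in> {b..a} \<inter> L \<Longrightarrow> t \<le> p"
    by blast
  have "compact ({a..c} \<inter> L)" "{a..c} \<inter> L \<noteq> {}"
    using \<open>closed L\<close> \<open>c \<in> {a..c} \<inter> L\<close> by auto
  from compact_attains_inf[OF this] obtain q
    where q: "q \<in> {a..c} \<inter> L" and q_min: "\<And>t. t \<in> {a..c} \<inter> L \<Longrightarrow> q \<le> t"
    by blast
  have "p \<noteq> a" "q \<noteq> a"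
    using p q \<open>g a < m\<close> by (auto simp: L_def)
  with p q have "p < a" "a < q" by auto
  have below: "g t < m" if "p < t" "t < q" for t
  proof (cases "t \<le> a")
    case True
    then show ?thesis using p_max[of t] p that by (force simp: L_def)
  next
    case False
    then show ?thesis using q_min[of t] q that by (force simp: L_def)
  qed
  define z where "z = (p + q) / 2"
  have "g z < m"
    using below \<open>p < a\<close> \<open>a < q\<close> by (simp add: z_def)
  have "m * m \<le> g p * g q"
    using p q \<open>0 < m\<close> by (intro mult_mono) (auto simp: L_def)
  also have "\<dots> \<le> g z * g z"
    using midpoint \<open>p < a\<close> \<open>a < q\<close> unfolding z_def by simp
  also have "\<dots> < m * m"
    using \<open>g z < m\<close> nonneg[of z] by (intro mult_strict_mono') auto
  finally show False by simp
qed

lemma quasiconcave_int_unique_strict_local_max: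
  fixes u :: "int \<Rightarrow> 'b::linorder"
  assumes "quasiconcave u"
  shows "\<exists>p. \<forall>k. k \<noteq> p \<longrightarrow> u k \<le> u (k - 1) \<or> u k \<le> u (k + 1)"
proof -
  define peak where "peak k \<longleftrightarrow> u (k - 1) < u k \<and> u (k + 1) < u k" for k
  have not_two_peaks: False if "peak k" "peak l" "k < l" for k l
  proof (cases "l = k + 1")
    case True
    with that show False by (auto simp: peak_def)
  next
    case False
    with \<open>k < l\<close> have "k < k + 1" "k + 1 < l" "k < l - 1" "l - 1 < l" by auto
    with quasiconcaveD[OF assms] have "min (u k) (u l) \<le> u (k + 1)" "min (u k) (u l) \<le> u (l - 1)"
      by blast+
    with that show False by (auto simp: peak_def min_def split: if_splits)
  qed
  obtain p where "\<And>k. peak k \<Longrightarrow> k = p"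
    using not_two_peaks by (metis linorder_neqE)
  then have "u k \<le> u (k - 1) \<or> u k \<le> u (k + 1)" if "k \<noteq> p" for k
    using that unfolding peak_def by (meson not_le)
  then show ?thesis by blast
qed

lemma sum_set_integral_unit_intervals_le:
  fixes g :: "real \<Rightarrow> real"
  assumes integ: "integrable lborel g" and nonneg: "\<And>t. 0 \<le> g t" and "finite F"
  shows "(\<Sum>k\<in>F. LINT t:{a + of_int k..<a + of_int k + 1}|lborel. g t) \<le> integral\<^sup>L lborel g"
proof -
  let ?J = "\<lambda>k::int. {a + of_int k..<a + of_int k + 1}"
  have "t \<in> ?J k \<Longrightarrow> k = \<lfloor>t - a\<rfloor>" for t k
    by (rule floor_unique[symmetric]) auto
  then have "disjoint_family_on ?J F"
    unfolding disjoint_family_on_def by blast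
  moreover have "set_integrable lborel (?J k) g" for k
    unfolding set_integrable_def using integ by (intro integrable_mult_indicator) auto
  ultimately have "(\<Sum>k\<in>F. LINT t:?J k|lborel. g t) = (LINT t:(\<Union>k\<in>F. ?J k)|lborel. g t)"
    using \<open>finite F\<close> by (intro set_integral_finite_Union[symmetric]) auto
  also have "\<dots> \<le> integral\<^sup>L lborel g"
  proof -
    have "(\<Union>k\<in>F. ?J k) \<in> sets lborel"
      using \<open>finite F\<close> by (intro sets.finite_UN) auto
    then have "integrable lborel (\<lambda>t. indicator (\<Union>k\<in>F. ?J k) t *\<^sub>R g t)"
      using integ by (rule integrable_mult_indicator)
    then show ?thesis
      unfolding set_lebesgue_integral_def using integ nonneg
      by (intro integral_mono) (auto split: split_indicator)
  qed
  finally show ?thesis .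
qed

lemma min_le_set_integral_unit_interval:
  fixes g :: "real \<Rightarrow> real"
  assumes qc: "quasiconcave g" and integ: "integrable lborel g"
  shows "min (g a) (g (a + 1)) \<le> (LINT t:{a..<a + 1}|lborel. g t)"
proof -
  have "min (g a) (g (a + 1)) = (LINT t:{a..<a + 1}|lborel. min (g a) (g (a + 1)))"
    by (simp add: set_integral_const)
  also have "\<dots> \<le> (LINT t:{a..<a + 1}|lborel. g t)"
  proof (rule set_integral_mono)
    show "set_integrable lborel {a..<a + 1} (\<lambda>_. min (g a) (g (a + 1)))"
      by (simp add: set_integrable_def)
    show "set_integrable lborel {a..<a + 1} g"
      unfolding set_integrable_def using integ by (intro integrable_mult_indicator) auto
    show "min (g a) (g (a + 1)) \<le> g t" if "t \<in> {a..<a + 1}" for t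
      using quasiconcaveD[OF qc, of a t "a + 1"] that by (cases "t = a") auto
  qed
  finally show ?thesis .
qed

lemma quasiconcave_summable_on_int_translates:
  fixes g :: "real \<Rightarrow> real"
  assumes qc: "quasiconcave g" and nonneg: "\<And>t. 0 \<le> g t" and integ: "integrable lborel g"
  shows "(\<lambda>k::int. g (x + of_int k)) summable_on UNIV"
proof -
  define u where "u k = g (x + of_int k)" for k :: int
  define I where "I k = (LINT t:{x + of_int k..<x + of_int k + 1}|lborel. g t)" for k :: int
  have "quasiconcave u"
    using quasiconcaveD[OF qc] by (auto simp: quasiconcave_def u_def)
  then obtain p where p: "\<And>k. k \<noteq> p \<Longrightarrow> u k \<le> u (k - 1) \<or> u k \<le> u (k + 1)"
    using quasiconcave_int_unique_strict_local_max by blast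
  have I_nonneg: "0 \<le> I k" for k
    unfolding I_def set_lebesgue_integral_def using nonneg
    by (intro integral_nonneg_AE) (simp split: split_indicator)
  have min_le_I: "min (u k) (u (k + 1)) \<le> I k" for k
    using min_le_set_integral_unit_interval[OF qc integ, of "x + of_int k"]
    by (simp add: u_def I_def add.assoc)
  have sum_I_le: "sum I G \<le> integral\<^sup>L lborel g" if "finite G" for G
    unfolding I_def using integ nonneg that by (rule sum_set_integral_unit_intervals_le)
  have u_le: "u k \<le> I (k - 1) + I k" if "k \<noteq> p" for k
    using p[OF that] min_le_I[of k] min_le_I[of "k - 1"] I_nonneg[of k] I_nonneg[of "k - 1"]
    by (auto simp: min_def split: if_splits)
  have "sum u F \<le> 2 * integral\<^sup>L lborel g + u p" if "finite F" for F
  proof -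
    have "sum u F = sum u (F - {p}) + sum u (F \<inter> {p})"
      using sum.Int_Diff[OF that, of u "{p}"] by simp
    also have "sum u (F \<inter> {p}) \<le> u p"
      using nonneg[of "x + of_int p"] by (cases "p \<in> F") (auto simp: u_def)
    also have "sum u (F - {p}) \<le> (\<Sum>k\<in>F - {p}. I (k - 1) + I k)"
      using u_le by (intro sum_mono) auto
    also have "\<dots> \<le> (\<Sum>k\<in>F. I (k - 1) + I k)"
      using that I_nonneg by (intro sum_mono2) (auto intro: add_nonneg_nonneg)
    also have "\<dots> = sum I ((\<lambda>k. k - 1) ` F) + sum I F"
      by (simp add: sum.distrib sum.reindex inj_on_def)
    also have "\<dots> \<le> 2 * integral\<^sup>L lborel g"
      using sum_I_le[of F] sum_I_le[of "(\<lambda>k. k - 1) ` F"] that by simp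
    finally show ?thesis by simp
  qed
  moreover have "0 \<le> u k" for k
    using nonneg by (simp add: u_def)
  ultimately have "u summable_on UNIV"
    by (intro nonneg_bdd_above_summable_on bdd_aboveI[where M = "2 * integral\<^sup>L lborel g + u p"]) auto
  then show ?thesis
    unfolding u_def .
qed

lemma set_integral_shift_real:
  fixes h :: "real \<Rightarrow> 'a::{banach, second_countable_topology}"
  shows "(LINT t:{a + c..<b + c}|lborel. h t) = (LINT x:{a..<b}|lborel. h (x + c))"
  using lborel_integral_real_affine[of 1 "\<lambda>t. indicator {a + c..<b + c} t *\<^sub>R h t" c]
  unfolding set_lebesgue_integral_def by (simp add: indicator_def add.commute)

lemma set_integrable_shift_real:
  fixes h :: "real \<Rightarrow> 'a::{banach, second_countable_topology}"
  assumes "integrable lborel h"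
  shows "set_integrable lborel {a..<b} (\<lambda>x. h (x + c))"
  using lborel_integrable_real_affine[OF assms, of 1 c]
  unfolding set_integrable_def by (intro integrable_mult_indicator) (auto simp: add.commute)

text \<open>\<open>sums_integral\<close> handles \<open>\<nat>\<close>-indexed series only, so the unit intervals
  \<open>[k, k + 1)\<close>, \<open>k \<in> \<int>\<close>, are enumerated by \<open>int_decode\<close>.\<close>

lemma sums_set_integral_unit_intervals:
  fixes h :: "real \<Rightarrow> 'a::{banach, second_countable_topology}"
  assumes integ: "integrable lborel h"
  shows "(\<lambda>n. LINT t:{of_int (int_decode n)..<of_int (int_decode n) + 1}|lborel. h t)
           sums integral\<^sup>L lborel h"
proof -
  define J where "J n = {real_of_int (int_decode n)..<of_int (int_decode n) + 1}" for n
  define P where "P n t = indicator (J n) t *\<^sub>R h t" for n t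
  have "t \<in> J n \<longleftrightarrow> \<lfloor>t\<rfloor> = int_decode n" for t n
    unfolding J_def floor_eq_iff by auto
  then have "t \<in> J n \<longleftrightarrow> n = int_encode \<lfloor>t\<rfloor>" for t n
    by (metis int_decode_inverse int_encode_inverse)
  then have P_single: "P n t = (if n = int_encode \<lfloor>t\<rfloor> then h t else 0)" for n t
    by (simp add: P_def indicator_def)
  have "integrable lborel (P n)" for n
    unfolding P_def using integ by (intro integrable_mult_indicator) (auto simp: J_def)
  moreover have "summable (\<lambda>n. norm (P n t))" for t
  proof -
    have "(\<lambda>n. norm (P n t)) = (\<lambda>n. if n = int_encode \<lfloor>t\<rfloor> then norm (h t) else 0)"
      by (simp add: P_single fun_eq_iff)
    then show ?thesis by simp
  qed
  moreover have "summable (\<lambda>n. LINT t|lborel. norm (P n t))"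
  proof (rule summableI_nonneg_bounded)
    fix N
    have "(\<Sum>n<N. LINT t|lborel. norm (P n t))
        = (\<Sum>k\<in>int_decode ` {..<N}. LINT t:{0 + of_int k..<0 + of_int k + 1}|lborel. norm (h t))"
      using inj_on_subset[OF inj_int_decode subset_UNIV]
      by (simp add: sum.reindex P_def J_def set_lebesgue_integral_def)
    also have "\<dots> \<le> integral\<^sup>L lborel (\<lambda>t. norm (h t))"
      using integ by (intro sum_set_integral_unit_intervals_le) auto
    finally show "(\<Sum>n<N. LINT t|lborel. norm (P n t)) \<le> integral\<^sup>L lborel (\<lambda>t. norm (h t))" .
  qed (auto intro: integral_nonneg_AE)
  ultimately have "(\<lambda>n. integral\<^sup>L lborel (P n)) sums (LINT t|lborel. (\<Sum>n. P n t))"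
    by (intro sums_integral) auto
  moreover have "(\<Sum>n. P n t) = h t" for t
    unfolding P_single using sums_single[of "int_encode \<lfloor>t\<rfloor>" "\<lambda>_. h t"] by (simp add: sums_iff)
  ultimately show ?thesis
    unfolding set_lebesgue_integral_def by (simp add: P_def[abs_def] J_def)
qed

lemma integral_lborel_eq_set_integral_periodization:
  fixes h :: "real \<Rightarrow> 'a::{banach, second_countable_topology}"
  assumes integ: "integrable lborel h"
    and translates: "\<And>x. (\<lambda>k::int. norm (h (x + of_int k))) summable_on UNIV"
  shows "integral\<^sup>L lborel h = (LINT x:{0..<1}|lborel. (\<Sum>\<^sub>\<infinity>k::int. h (x + of_int k)))"
proof -
  define Q where "Q n x = indicator {0..<1} x *\<^sub>R h (x + of_int (int_decode n))" for n x
  have shift: "(LINT t:{of_int k..<of_int k + 1}|lborel. f t) = (LINT x:{0..<1}|lborel. f (x + of_int k))"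
    for k :: int and f :: "real \<Rightarrow> 'b::{banach, second_countable_topology}"
    using set_integral_shift_real[where h = f and a = 0 and b = 1 and c = "of_int k"]
    by (simp add: add.commute)
  have "(\<lambda>n. integral\<^sup>L lborel (Q n)) sums integral\<^sup>L lborel h"
    using sums_set_integral_unit_intervals[OF integ]
    unfolding shift by (simp add: Q_def[abs_def] set_lebesgue_integral_def)
  moreover have "(\<lambda>n. integral\<^sup>L lborel (Q n)) sums (LINT x|lborel. (\<Sum>n. Q n x))"
  proof (rule sums_integral)
    show "integrable lborel (Q n)" for n
      using set_integrable_shift_real[OF integ] by (simp add: Q_def[abs_def] set_integrable_def)
    have "summable (\<lambda>n. norm (h (x + of_int (int_decode n))))" for x
    proof (rule summable_on_imp_summable)
      show "(\<lambda>n. norm (h (x + of_int (int_decode n)))) summable_on UNIV"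
        using summable_on_reindex_bij_betw[OF bij_int_decode, of "\<lambda>k. norm (h (x + of_int k))"]
          translates[of x] by simp
    qed
    then show "AE x in lborel. summable (\<lambda>n. norm (Q n x))"
      by (auto simp: Q_def indicator_def)
    show "summable (\<lambda>n. LINT x|lborel. norm (Q n x))"
      using sums_summable[OF sums_set_integral_unit_intervals[of "\<lambda>t. norm (h t)"]] integ
      unfolding shift by (simp add: Q_def[abs_def] set_lebesgue_integral_def)
  qed
  moreover have "(\<Sum>n. Q n x) = indicator {0..<1} x *\<^sub>R (\<Sum>\<^sub>\<infinity>k::int. h (x + of_int k))" for x
  proof -
    have "((\<lambda>k::int. h (x + of_int k)) has_sum (\<Sum>\<^sub>\<infinity>k::int. h (x + of_int k))) UNIV"
      using abs_summable_summable[OF translates] by (rule has_sum_infsum)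
    then have "(\<lambda>n. h (x + of_int (int_decode n))) sums (\<Sum>\<^sub>\<infinity>k::int. h (x + of_int k))"
      using has_sum_reindex_bij_betw[OF bij_int_decode, of "\<lambda>k. h (x + of_int k)"]
      by (intro has_sum_imp_sums) simp
    then show ?thesis
      unfolding Q_def by (intro sums_unique[symmetric] sums_scaleR_right)
  qed
  ultimately show ?thesis
    unfolding set_lebesgue_integral_def by (simp add: sums_unique2)
qed

lemma infsum_complex_of_real: "(\<Sum>\<^sub>\<infinity>x\<in>A. complex_of_real (f x)) = complex_of_real (\<Sum>\<^sub>\<infinity>x\<in>A. f x)"
proof (cases "f summable_on A")
  case True
  then show ?thesis
    by (intro infsumI has_sum_of_real has_sum_infsum)
next
  case False
  then have "\<not> (\<lambda>x. complex_of_real (f x)) summable_on A"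
    using summable_on_Re by fastforce
  with False show ?thesis
    by (simp add: infsum_not_exists)
qed

lemma summable_on_zak_terms:
  fixes f :: "real \<Rightarrow> complex"
  assumes "(\<lambda>k::int. norm (f (x + of_int k))) summable_on UNIV"
  shows "(\<lambda>k::int. f (x + of_int k) * exp (- 2 * pi * \<i> * complex_of_real (of_int k * w))) summable_on UNIV"
proof (rule abs_summable_summable)
  have "norm (exp (- 2 * pi * \<i> * complex_of_real (of_int k * w))) = 1" for k :: int
    by simp
  then show "(\<lambda>k::int. norm (f (x + of_int k) * exp (- 2 * pi * \<i> * complex_of_real (of_int k * w))))
      summable_on UNIV"
    using assms by (simp add: norm_mult)
qed

lemma zak_add_one:
  "zak f (x + 1) w = exp (2 * pi * \<i> * complex_of_real w) * zak f x w"
proof -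
  define e where "e k = exp (- 2 * pi * \<i> * complex_of_real (of_int k * w))" for k :: int
  have "zak f (x + 1) w = (\<Sum>\<^sub>\<infinity>k::int. f (x + of_int (k + 1)) * e (k + 1 - 1))"
    unfolding zak_def e_def by (simp add: ac_simps)
  also have "\<dots> = (\<Sum>\<^sub>\<infinity>k::int. f (x + of_int k) * e (k - 1))"
    by (rule infsum_reindex_bij_betw[of "\<lambda>k. k + 1"])
       (auto intro!: bij_betwI[where g = "\<lambda>k. k - 1"])
  also have "\<dots> = (\<Sum>\<^sub>\<infinity>k::int. exp (2 * pi * \<i> * complex_of_real w) * (f (x + of_int k) * e k))"
    by (intro infsum_cong) (simp add: e_def algebra_simps flip: exp_add)
  also have "\<dots> = exp (2 * pi * \<i> * complex_of_real w) * zak f x w"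
    unfolding zak_def e_def by (rule infsum_cmult_right')
  finally show ?thesis .
qed

lemma zak_half_add_two: "zak f (x + 2) (1/2) = zak f x (1/2)"
proof -
  have "exp (2 * pi * \<i> * complex_of_real (1/2)) = -1"
    using exp_pi_i' by (simp add: mult.commute)
  then show ?thesis
    using zak_add_one[of f "x + 1" "1/2"] zak_add_one[of f x "1/2"] by (simp add: add.assoc)
qed

lemma exp_neg_pi_i_int:
  "exp (- 2 * pi * \<i> * complex_of_real (of_int k * (1/2))) = complex_of_real (cos (pi * of_int k))"
proof -
  have "exp (- 2 * pi * \<i> * complex_of_real (of_int k * (1/2))) = cis (- (pi * of_int k))"
    by (simp add: cis_conv_exp algebra_simps)
  then show ?thesis
    by (simp add: cis.ctr sin_int_times_real mult.commute Complex_eq)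
qed

lemma zak_of_real_half:
  "zak (\<lambda>t. complex_of_real (g t)) x (1/2)
     = complex_of_real (\<Sum>\<^sub>\<infinity>k::int. g (x + of_int k) * cos (pi * of_int k))"
  unfolding zak_def exp_neg_pi_i_int of_real_mult[symmetric] by (rule infsum_complex_of_real)

lemma fourier_eq_set_integral_zak:
  fixes f :: "real \<Rightarrow> complex"
  assumes integ: "integrable lborel f"
    and translates: "\<And>x. (\<lambda>k::int. norm (f (x + of_int k))) summable_on UNIV"
  shows "fourier f w = (LINT x:{0..<1}|lborel. exp (- 2 * pi * \<i> * complex_of_real (x * w)) * zak f x w)"
proof -
  define e where "e t = exp (- 2 * pi * \<i> * complex_of_real (t * w))" for t
  have norm_e: "norm (e t) = 1" for t
    unfolding e_def by simp
  have "continuous_on UNIV e"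
    unfolding e_def by (intro continuous_intros)
  then have "e \<in> borel_measurable lborel"
    by (simp add: borel_measurable_continuous_onI)
  then have "integrable lborel (\<lambda>t. f t * e t)"
    using integ by (intro Bochner_Integration.integrable_bound[OF integ]) (auto simp: norm_mult norm_e)
  moreover have "(\<lambda>k::int. norm (f (x + of_int k) * e (x + of_int k))) summable_on UNIV" for x
    using translates[of x] by (simp add: norm_mult norm_e)
  ultimately have "fourier f w = (LINT x:{0..<1}|lborel. (\<Sum>\<^sub>\<infinity>k::int. f (x + of_int k) * e (x + of_int k)))"
    unfolding fourier_def e_def[symmetric] by (rule integral_lborel_eq_set_integral_periodization)
  also have "\<dots> = (LINT x:{0..<1}|lborel. e x * zak f x w)"
  proof -
    have shift: "f (x + of_int k) * e (x + of_int k)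
        = e x * (f (x + of_int k) * exp (- 2 * pi * \<i> * complex_of_real (of_int k * w)))" for x k
      by (simp add: e_def algebra_simps flip: exp_add)
    show ?thesis
      unfolding zak_def infsum_cmult_right'[symmetric] by (simp only: shift)
  qed
  finally show ?thesis
    unfolding e_def .
qed

lemma zak_not_identically_zero:
  fixes f :: "real \<Rightarrow> complex"
  assumes "integrable lborel f"
    and "\<And>x. (\<lambda>k::int. norm (f (x + of_int k))) summable_on UNIV"
    and "fourier f w \<noteq> 0"
  shows "\<exists>x. zak f x w \<noteq> 0"
proof (rule ccontr)
  assume "\<nexists>x. zak f x w \<noteq> 0"
  then have "fourier f w = 0"
    using fourier_eq_set_integral_zak[OF assms(1,2), of w] by simp
  with assms(3) show False ..
qed

lemma tp_factor_nonzero: "tp_factor a w \<noteq> 0"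
proof -
  have "1 + 2 * pi * \<i> * complex_of_real (w / a) \<noteq> 0"
  proof
    assume "1 + 2 * pi * \<i> * complex_of_real (w / a) = 0"
    then have "Re (1 + 2 * pi * \<i> * complex_of_real (w / a)) = 0" by simp
    then show False by simp
  qed
  then show ?thesis
    unfolding tp_factor_def by simp
qed

theorem mainTheorem5:
  fixes g :: "real \<Rightarrow> real"
  assumes cont: "continuous_on UNIV g"
    and integ: "integrable lborel g"
    and tp: "totally_positive g"
    and form:
      "(\<exists>a :: nat \<Rightarrow> real. (\<forall>\<nu>. a \<nu> \<noteq> 0) \<and> summable (\<lambda>\<nu>. 1 / (a \<nu>)\<^sup>2) \<and>
          (\<forall>w. (\<lambda>\<nu>. tp_factor (a \<nu>) w) has_prod fourier (\<lambda>t. complex_of_real (g t)) w))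
       \<or> (\<exists>(n::nat) (a :: nat \<Rightarrow> real). (\<forall>\<nu><n. a \<nu> \<noteq> 0) \<and>
          (\<forall>w. fourier (\<lambda>t. complex_of_real (g t)) w = (\<Prod>\<nu><n. tp_factor (a \<nu>) w)))"
  shows "(\<forall>x. (\<lambda>k::int. complex_of_real (g (x + of_int k)) * exp (- 2 * pi * \<i> * complex_of_real (of_int k * (1/2)))) summable_on UNIV)
    \<and> (\<forall>x. zak (\<lambda>t. complex_of_real (g t)) x (1/2) \<in> \<real>)
    \<and> (\<forall>x. zak (\<lambda>t. complex_of_real (g t)) (x + 2) (1/2) = zak (\<lambda>t. complex_of_real (g t)) x (1/2))
    \<and> (\<exists>x. zak (\<lambda>t. complex_of_real (g t)) x (1/2) \<noteq> 0)"
proof -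
  have nonneg: "0 \<le> g t" for t
    using tp by (rule totally_positive_nonneg)
  have "quasiconcave g"
    using cont nonneg totally_positive_midpoint[OF tp] by (rule quasiconcave_if_midpoint_log_concave)
  then have translates: "(\<lambda>k::int. norm (complex_of_real (g (x + of_int k)))) summable_on UNIV" for x
    using quasiconcave_summable_on_int_translates[OF _ nonneg integ] nonneg by simp
  have "fourier (\<lambda>t. complex_of_real (g t)) (1/2) \<noteq> 0"
    using form
  proof (elim disjE exE conjE)
    fix a :: "nat \<Rightarrow> real"
    assume "\<forall>w. (\<lambda>\<nu>. tp_factor (a \<nu>) w) has_prod fourier (\<lambda>t. complex_of_real (g t)) w"
    then have "(\<lambda>\<nu>. tp_factor (a \<nu>) (1/2)) has_prod fourier (\<lambda>t. complex_of_real (g t)) (1/2)" ..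
    then have "fourier (\<lambda>t. complex_of_real (g t)) (1/2) = 0 \<longleftrightarrow> 0 \<in> range (\<lambda>\<nu>. tp_factor (a \<nu>) (1/2))"
      by (rule has_prod_eq_0_iff)
    then show ?thesis
      using tp_factor_nonzero by auto
  qed (simp add: tp_factor_nonzero)
  with integrable_of_real[OF integ] translates
  have "\<exists>x. zak (\<lambda>t. complex_of_real (g t)) x (1/2) \<noteq> 0"
    by (rule zak_not_identically_zero)
  moreover have "zak (\<lambda>t. complex_of_real (g t)) x (1/2) \<in> \<real>" for x
    unfolding zak_of_real_half by simp
  moreover have "(\<lambda>k::int. complex_of_real (g (x + of_int k))
      * exp (- 2 * pi * \<i> * complex_of_real (of_int k * (1/2)))) summable_on UNIV" for x
    using translates by (rule summable_on_zak_terms)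
  ultimately show ?thesis
    using zak_half_add_two by blast
qed

end
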